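(* Let $\mathcal{L}$ be a nonempty set and $\mathcal{C}: 2^{\mathcal{L}}\to 2^{\mathcal{L}}$ an L-logics. Then the relation $<^{+}$ on theories is irreflexive, and hence a strict partial order.
   Context: An L-logics is a map $\mathcal{C}: 2^{\mathcal{L}}\to 2^{\mathcal{L}}$ satisfying Inclusion ($A\subseteq\mathcal{C}(A)$ for all $A$) and Loop: for every $n\ge1$ and $A_0,\dots,A_{n-1}\subseteq\mathcal{L}$, if $A_i\subseteq\mathcal{C}(A_{i+1})$ for all $i=0,\dots,n-1$ (indices mod $n$) then $\mathcal{C}(A_0)=\mathcal{C}(A_1)$. A theory is a set $T\subseteq\mathcal{L}$ with $\mathcal{C}(T)=T$. For theories $T,S$: $T\le S$ iff there is $A\subseteq S$ with $\mathcal{C}(A)=T$; $T<S$ iff $T\le S$ and $S\not\le T$. $<^{+}$ is the transitive closure of $<$ on the set of theories. *)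

theory Defs
  imports Main
begin

text \<open>The language L is the (nonempty) type 'a; C maps subsets of L to subsets of L.\<close>

definition L_logic :: "('a set \<Rightarrow> 'a set) \<Rightarrow> bool" where
  "L_logic C \<longleftrightarrow>
     (\<forall>A. A \<subseteq> C A) \<and>
     (\<forall>n::nat. \<forall>As :: nat \<Rightarrow> 'a set. n \<ge> 1 \<longrightarrow>
        (\<forall>i<n. As i \<subseteq> C (As ((i + 1) mod n))) \<longrightarrow> C (As 0) = C (As (1 mod n)))"

definition is_theory :: "('a set \<Rightarrow> 'a set) \<Rightarrow> 'a set \<Rightarrow> bool" where
  "is_theory C T \<longleftrightarrow> C T = T"

definition theory_le :: "('a set \<Rightarrow> 'a set) \<Rightarrow> 'a set \<Rightarrow> 'a set \<Rightarrow> bool" where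
  "theory_le C T S \<longleftrightarrow> (\<exists>A. A \<subseteq> S \<and> C A = T)"

definition theory_less :: "('a set \<Rightarrow> 'a set) \<Rightarrow> 'a set \<Rightarrow> 'a set \<Rightarrow> bool" where
  "theory_less C T S \<longleftrightarrow> theory_le C T S \<and> \<not> theory_le C S T"

definition theory_less_rel :: "('a set \<Rightarrow> 'a set) \<Rightarrow> ('a set \<times> 'a set) set" where
  "theory_less_rel C = {(T, S). is_theory C T \<and> is_theory C S \<and> theory_less C T S}"

end

theory Submission
  imports Defs
begin

text \<open>
  Read \<open>A \<subseteq> C B\<close> as an edge from \<open>A\<close> to \<open>B\<close>; the Loop axiom says that
  \<open>C\<close> is constant along any cycle of such edges. If \<open>T \<le> S\<close> for theories,
  witnessed by \<open>A \<subseteq> S\<close> with \<open>C A = T\<close>, then \<open>T \<rightarrow> A \<rightarrow> S\<close> are edges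
  (\<open>C\<close> need not be monotone, so there is no direct edge \<open>T \<rightarrow> S\<close>). Hence a
  cycle \<open>T < S <\<^sup>+ T\<close> yields a cycle of edges through \<open>A\<close> and \<open>S\<close>, so
  \<open>T = C A = C S = S\<close>, contradicting \<open>T < S\<close>.
\<close>

definition entailment_rel :: "('a set \<Rightarrow> 'a set) \<Rightarrow> ('a set \<times> 'a set) set" where
  "entailment_rel C = {(A, B). A \<subseteq> C B}"

lemma L_logic_closed_path:
  assumes "L_logic C" and "0 < n"
    and path: "\<forall>i<n. g i \<subseteq> C (g (Suc i))" and closed: "g n = g 0"
  shows "C (g 0) = C (g 1)"
proof -
  have "\<forall>i<n. g i \<subseteq> C (g ((i + 1) mod n))"
  proof (intro allI impI)
    fix i assume "i < n"
    then consider "Suc i < n" | "Suc i = n" by linarith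
    then show "g i \<subseteq> C (g ((i + 1) mod n))"
    proof cases
      case 1
      then show ?thesis using path by simp
    next
      case 2
      then have "g i \<subseteq> C (g n)" using path \<open>i < n\<close> by auto
      with 2 closed show ?thesis by simp
    qed
  qed
  with assms(1,2) have "C (g 0) = C (g (1 mod n))"
    unfolding L_logic_def by (simp add: Suc_le_eq)
  moreover have "g (1 mod n) = g 1"
    using closed \<open>0 < n\<close> by (cases "n = 1") auto
  ultimately show ?thesis by simp
qed

lemma L_logic_cycle:
  assumes "L_logic C"
    and "(A, B) \<in> entailment_rel C" and "(B, A) \<in> (entailment_rel C)\<^sup>*"
  shows "C A = C B"
proof -
  obtain k f where f: "f 0 = B" "f k = A" "\<forall>i<k. f i \<subseteq> C (f (Suc i))"
    using assms(3) by (auto simp: rtrancl_power relpow_fun_conv entailment_rel_def)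
  define g where "g i = (if i = 0 then A else f (i - 1))" for i
  have "\<forall>i<Suc k. g i \<subseteq> C (g (Suc i))"
  proof (intro allI impI)
    fix i assume "i < Suc k"
    then show "g i \<subseteq> C (g (Suc i))"
      using f assms(2) by (cases i) (auto simp: g_def entailment_rel_def)
  qed
  moreover have "g (Suc k) = g 0"
    using f by (simp add: g_def)
  ultimately have "C (g 0) = C (g 1)"
    using L_logic_closed_path[OF assms(1)] by blast
  then show ?thesis
    using f by (simp add: g_def)
qed

lemma theory_less_rel_subset_entailment:
  "theory_less_rel C \<subseteq> (entailment_rel C)\<^sup>*"
proof
  fix p assume "p \<in> theory_less_rel C"
  then obtain T S A where "p = (T, S)" "is_theory C S" "A \<subseteq> S" "C A = T"
    by (auto simp: theory_less_rel_def theory_less_def theory_le_def)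
  then have "(T, A) \<in> entailment_rel C" "(A, S) \<in> entailment_rel C"
    by (auto simp: entailment_rel_def is_theory_def)
  with \<open>p = (T, S)\<close> show "p \<in> (entailment_rel C)\<^sup>*" by auto
qed

lemma theory_less_rel_cycle:
  assumes "L_logic C"
    and less: "(T, S) \<in> theory_less_rel C" and return: "(S, T) \<in> (theory_less_rel C)\<^sup>*"
  shows "T = S"
proof -
  from less obtain A where A: "A \<subseteq> S" "C A = T" and "is_theory C S"
    by (auto simp: theory_less_rel_def theory_less_def theory_le_def)
  then have "(A, S) \<in> entailment_rel C"
    by (simp add: entailment_rel_def is_theory_def)
  moreover have "(S, A) \<in> (entailment_rel C)\<^sup>*"
  proof -
    have "(S, T) \<in> (entailment_rel C)\<^sup>*"
      using return rtrancl_subset_rtrancl[OF theory_less_rel_subset_entailment] by blast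
    moreover have "(T, A) \<in> entailment_rel C"
      using A by (simp add: entailment_rel_def)
    ultimately show ?thesis by simp
  qed
  ultimately have "C A = C S"
    using L_logic_cycle[OF assms(1)] by blast
  with A \<open>is_theory C S\<close> show ?thesis
    by (simp add: is_theory_def)
qed

lemma theory_less_rel_irrefl: "(T, T) \<notin> theory_less_rel C"
  by (auto simp: theory_less_rel_def theory_less_def theory_le_def is_theory_def)

theorem lemma19:
  fixes C :: "'a set \<Rightarrow> 'a set"
  assumes "L_logic C"
  shows "irrefl ((theory_less_rel C)\<^sup>+) \<and> trans ((theory_less_rel C)\<^sup>+)"
proof
  show "irrefl ((theory_less_rel C)\<^sup>+)"
    unfolding irrefl_def
  proof (intro allI notI)
    fix T assume "(T, T) \<in> (theory_less_rel C)\<^sup>+"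
    then obtain S where "(T, S) \<in> theory_less_rel C" "(S, T) \<in> (theory_less_rel C)\<^sup>*"
      by (auto dest: tranclD)
    with theory_less_rel_cycle[OF assms] theory_less_rel_irrefl show False
      by metis
  qed
  show "trans ((theory_less_rel C)\<^sup>+)"
    by (rule trans_trancl)
qed

end
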